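(* For each of the four possibilities (the noncentered operator $\mathcal M_{\mathfrak X}$ does / does not possess the dichotomy property, and the centered operator $\mathcal M^{\rm c}_{\mathfrak X}$ does / does not possess the dichotomy property) there exists a nondoubling metric measure space $\mathfrak X$ realizing it.
   Context: Metric measure space $(X,\rho,\mu)$: nonempty set, metric, nonnegative Borel measure with $\mu(B)\in(0,\infty)$ for each open ball $B$; doubling means $\mu(B(x,2s))\le C\mu(B(x,s))$ uniformly. $L^1_{\rm loc}(\mu)$: functions integrable on every open ball. $\mathcal M^{\rm c}f(x)=\sup_{s>0}\mu(B(x,s))^{-1}\int_{B(x,s)}|f|d\mu$, $\mathcal Mf(x)=\sup_{B\ni x}\mu(B)^{-1}\int_B|f|d\mu$. $\mathcal M$ possesses the dichotomy property if for every $f\in L^1_{\rm loc}(\mu)$ either $\mu(\{\mathcal Mf=\infty\})=0$ or $\{\mathcal Mf=\infty\}=X$; analogously for $\mathcal M^{\rm c}$. *)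

theory Defs
  imports "HOL-Analysis.Analysis"
begin

definition metric_borel :: "'a set \<Rightarrow> ('a \<Rightarrow> 'a \<Rightarrow> real) \<Rightarrow> 'a set set" where
  "metric_borel X rho = sigma_sets X {U. openin (Metric_space.mtopology X rho) U}"

definition metric_measure_space :: "'a set \<Rightarrow> ('a \<Rightarrow> 'a \<Rightarrow> real) \<Rightarrow> 'a measure \<Rightarrow> bool" where
  "metric_measure_space X rho mu \<longleftrightarrow>
     X \<noteq> {} \<and> Metric_space X rho \<and> space mu = X \<and> sets mu = metric_borel X rho \<and>
     (\<forall>x\<in>X. \<forall>s>0. 0 < emeasure mu (Metric_space.mball X rho x s) \<and>
                    emeasure mu (Metric_space.mball X rho x s) < \<infinity>)"

definition doubling :: "'a set \<Rightarrow> ('a \<Rightarrow> 'a \<Rightarrow> real) \<Rightarrow> 'a measure \<Rightarrow> bool" where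
  "doubling X rho mu \<longleftrightarrow> (\<exists>C::real. \<forall>x\<in>X. \<forall>s::real. 0 < s \<longrightarrow>
     emeasure mu (Metric_space.mball X rho x (2 * s)) \<le> ennreal C * emeasure mu (Metric_space.mball X rho x s))"

definition L1loc :: "'a set \<Rightarrow> ('a \<Rightarrow> 'a \<Rightarrow> real) \<Rightarrow> 'a measure \<Rightarrow> ('a \<Rightarrow> real) set" where
  "L1loc X rho mu = {f. f \<in> borel_measurable mu \<and>
     (\<forall>x\<in>X. \<forall>s>0. (\<integral>\<^sup>+ y. ennreal \<bar>f y\<bar> * indicator (Metric_space.mball X rho x s) y \<partial>mu) < \<infinity>)}"

definition ball_avg :: "'a measure \<Rightarrow> 'a set \<Rightarrow> ('a \<Rightarrow> real) \<Rightarrow> ennreal" where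
  "ball_avg mu B f = (\<integral>\<^sup>+ y. ennreal \<bar>f y\<bar> * indicator B y \<partial>mu) / emeasure mu B"

definition maxc :: "'a set \<Rightarrow> ('a \<Rightarrow> 'a \<Rightarrow> real) \<Rightarrow> 'a measure \<Rightarrow> ('a \<Rightarrow> real) \<Rightarrow> 'a \<Rightarrow> ennreal" where
  "maxc X rho mu f x = (SUP s\<in>{s::real. 0 < s}. ball_avg mu (Metric_space.mball X rho x s) f)"

definition maxnc :: "'a set \<Rightarrow> ('a \<Rightarrow> 'a \<Rightarrow> real) \<Rightarrow> 'a measure \<Rightarrow> ('a \<Rightarrow> real) \<Rightarrow> 'a \<Rightarrow> ennreal" where
  "maxnc X rho mu f x = (SUP (y,s)\<in>{(y,s). y \<in> X \<and> 0 < s \<and> x \<in> Metric_space.mball X rho y s}.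
       ball_avg mu (Metric_space.mball X rho y s) f)"

definition dichotomy :: "'a set \<Rightarrow> ('a \<Rightarrow> 'a \<Rightarrow> real) \<Rightarrow> 'a measure \<Rightarrow>
    (('a \<Rightarrow> real) \<Rightarrow> 'a \<Rightarrow> ennreal) \<Rightarrow> bool" where
  "dichotomy X rho mu T \<longleftrightarrow> (\<forall>f\<in>L1loc X rho mu.
     (\<exists>N\<in>null_sets mu. {x\<in>X. T f x = \<infinity>} \<subseteq> N) \<or> {x\<in>X. T f x = \<infinity>} = X)"

end

theory Submission
  imports Defs
begin

text \<open>The space is \<open>\<nat>\<close>, grouped into levels \<open>{2k, 2k+1}\<close>; distinct points \<open>i, j\<close> are at
  distance \<open>2 max (level i) (level j) + 2 + c i j\<close> for a symmetric perturbation \<open>c\<close> with values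
  in \<open>[0, 1]\<close>. A ball whose top level is \<open>K\<close> therefore either contains all lower levels or is a
  small ball around a point of level \<open>K\<close>, and only small balls see the perturbation. Even points
  have mass 1 while odd masses are unbounded, so the space is not doubling. Every point has positive
  mass, so the dichotomy property says that an infinite supremum of means at one point forces the
  same at every point.
  If the first \<open>K\<close> levels weigh \<open>2^K\<close>, each ball containing lower levels is absorbed at bounded
  cost by a ball around any other point, and for centered balls nothing else occurs. Links
  \<open>c 0 (2k) = 0\<close> add the small balls \<open>{0, 2k}\<close> of mass 2, on which a function growing along the
  even points has unbounded means seen from \<open>0\<close> but not from \<open>1\<close>. With factorial weights large
  balls are no longer absorbed; linking each level pair makes small balls heavy enough to be
  absorbed anyway, whereas linking \<open>0\<close> only to even and \<open>1\<close> to odd points separates the centered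
  maximal functions at \<open>0\<close> and \<open>1\<close>.\<close>

definition level :: "nat \<Rightarrow> nat" where
  "level n = n div 2"

definition level_dist :: "(nat \<Rightarrow> nat \<Rightarrow> real) \<Rightarrow> nat \<Rightarrow> nat \<Rightarrow> real" where
  "level_dist c i j = (if i = j then 0 else 2 * real (max (level i) (level j)) + 2 + c i j)"

definition level_metric :: "(nat \<Rightarrow> nat \<Rightarrow> real) \<Rightarrow> real \<Rightarrow> real \<Rightarrow> real" where
  "level_metric c x y = level_dist c (nat \<lfloor>x\<rfloor>) (nat \<lfloor>y\<rfloor>)"

definition level_ball :: "(nat \<Rightarrow> nat \<Rightarrow> real) \<Rightarrow> nat \<Rightarrow> real \<Rightarrow> nat set" where
  "level_ball c i r = {j. level_dist c i j < r}"

definition centered_balls :: "(nat \<Rightarrow> nat \<Rightarrow> real) \<Rightarrow> nat \<Rightarrow> nat set set" where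
  "centered_balls c i = level_ball c i ` {0<..}"

definition balls_through :: "(nat \<Rightarrow> nat \<Rightarrow> real) \<Rightarrow> nat \<Rightarrow> nat set set" where
  "balls_through c i = {level_ball c k r | k r. 0 < r \<and> i \<in> level_ball c k r}"

definition weighted_measure :: "(nat \<Rightarrow> real) \<Rightarrow> real measure" where
  "weighted_measure m = point_measure \<nat> (\<lambda>x. ennreal (m (nat \<lfloor>x\<rfloor>)))"

definition weighted_sum :: "(nat \<Rightarrow> real) \<Rightarrow> (nat \<Rightarrow> real) \<Rightarrow> nat set \<Rightarrow> real" where
  "weighted_sum m g A = (\<Sum>j\<in>A. \<bar>g j\<bar> * m j)"

definition weighted_mean :: "(nat \<Rightarrow> real) \<Rightarrow> (nat \<Rightarrow> real) \<Rightarrow> nat set \<Rightarrow> ennreal" where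
  "weighted_mean m g A = ennreal (weighted_sum m g A / sum m A)"

definition infinity_propagates :: "(nat \<Rightarrow> real) \<Rightarrow> (nat \<Rightarrow> nat set set) \<Rightarrow> bool" where
  "infinity_propagates m F \<longleftrightarrow> (\<forall>g i j. (SUP A\<in>F i. weighted_mean m g A) = \<infinity> \<longrightarrow>
     (SUP A\<in>F j. weighted_mean m g A) = \<infinity>)"

lemma level_less_iff: "level j < K \<longleftrightarrow> j < 2 * K"
  unfolding level_def by auto

lemma level_le_iff: "level j \<le> K \<longleftrightarrow> j < 2 * K + 2"
  unfolding level_def by auto

lemma level_dist_neq: "i \<noteq> j \<Longrightarrow> level_dist c i j = 2 * real (max (level i) (level j)) + 2 + c i j"
  by (simp add: level_dist_def)

lemma level_dist_self [simp]: "level_dist c i i = 0"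
  by (simp add: level_dist_def)

lemma center_in_level_ball: "0 < r \<Longrightarrow> i \<in> level_ball c i r"
  by (simp add: level_ball_def)

lemma Nats_iff_real: "x \<in> \<nat> \<longleftrightarrow> (\<exists>n. x = real n)"
  by (auto simp: Nats_def)

lemma space_weighted_measure [simp]: "space (weighted_measure m) = \<nat>"
  and sets_weighted_measure [simp]: "sets (weighted_measure m) = Pow \<nat>"
  by (auto simp: weighted_measure_def space_point_measure sets_point_measure)

lemma obtain_top_level:
  assumes "finite A" "A \<noteq> {}"
  obtains K z where "A \<subseteq> {..<2 * K + 2}" "z \<in> A" "level z = K"
proof -
  have "Max (level ` A) \<in> level ` A"
    using assms by simp
  then obtain z where z: "z \<in> A" "level z = Max (level ` A)"
    by auto
  moreover have "A \<subseteq> {..<2 * Max (level ` A) + 2}"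
  proof
    fix x assume "x \<in> A"
    then have "level x \<le> Max (level ` A)" using assms by simp
    then show "x \<in> {..<2 * Max (level ` A) + 2}" by (simp add: level_le_iff)
  qed
  ultimately show ?thesis using that by blast
qed

lemma top_level_gt:
  fixes M K :: nat
  shows "\<not> A \<subseteq> {..<2 * M + 2} \<Longrightarrow> A \<subseteq> {..<2 * K + 2} \<Longrightarrow> M < K"
  by (meson lessThan_subset_iff add_le_mono1 mult_le_mono2 not_less order_trans)

lemma not_infinity_propagatesI:
  assumes "(SUP A\<in>F i. weighted_mean m g A) = \<infinity>" "(SUP A\<in>F j. weighted_mean m g A) \<le> ennreal r"
  shows "\<not> infinity_propagates m F"
proof
  assume "infinity_propagates m F"
  then have infinite: "(SUP A\<in>F j. weighted_mean m g A) = \<infinity>"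
    using assms(1) unfolding infinity_propagates_def by blast
  have "(SUP A\<in>F j. weighted_mean m g A) < \<infinity>"
    using assms(2) by (rule le_less_trans) simp
  then show False
    unfolding infinite by simp
qed

definition even_supported :: "(nat \<Rightarrow> real) \<Rightarrow> nat \<Rightarrow> real" where
  "even_supported h j = (if even j then h (j div 2) else 0)"

lemma weighted_sum_even_supported:
  assumes "\<And>k. m (2 * k) = 1"
  shows "weighted_sum m (even_supported h) {..<2 * K + 2} = (\<Sum>k\<le>K. \<bar>h k\<bar>)"
proof (induction K)
  case 0
  have "{..<2::nat} = {0, 1}" by auto
  then show ?case using assms[of 0] by (simp add: weighted_sum_def even_supported_def)
next
  case (Suc K)
  have "{..<2 * Suc K + 2} = insert (2 * K + 3) (insert (2 * (K + 1)) {..<2 * K + 2})" by auto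
  then show ?case
    using Suc assms[of "K + 1"] by (simp add: weighted_sum_def even_supported_def)
qed

lemma SUP_eq_infinity_ennrealI:
  assumes "\<And>r::real. \<exists>x\<in>S. ennreal r \<le> f x"
  shows "(SUP x\<in>S. f x) = (\<infinity>::ennreal)"
proof -
  have "\<exists>x\<in>S. y < f x" if y: "y < \<infinity>" for y
  proof -
    obtain n :: nat where "y < of_nat n"
      using ennreal_Ex_less_of_nat[of y] y by auto
    moreover obtain x where "x \<in> S" "ennreal (real n) \<le> f x"
      using assms by blast
    ultimately show ?thesis
      by (metis ennreal_of_nat_eq_real_of_nat order_less_le_trans)
  qed
  then show ?thesis by simp
qed

locale level_space =
  fixes c :: "nat \<Rightarrow> nat \<Rightarrow> real" and m :: "nat \<Rightarrow> real"
  assumes c_sym: "c i j = c j i" and c_nonneg: "0 \<le> c i j" and c_le_one: "c i j \<le> 1"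
    and m_pos: "0 < m j"
begin

abbreviation "\<rho> \<equiv> level_metric c"
abbreviation "\<mu> \<equiv> weighted_measure m"

lemma m_nonneg: "0 \<le> m j"
  using m_pos less_imp_le by blast

lemma sum_pos_nonempty: "finite A \<Longrightarrow> A \<noteq> {} \<Longrightarrow> 0 < sum m A"
  using m_pos by (intro sum_pos) auto

lemma weighted_sum_nonneg: "0 \<le> weighted_sum m g A"
  unfolding weighted_sum_def using m_nonneg by (intro sum_nonneg) simp

lemma sum_mono_subset: "finite B \<Longrightarrow> A \<subseteq> B \<Longrightarrow> sum m A \<le> sum m B"
  using m_nonneg by (intro sum_mono2) auto

lemma member_le_sum_weights: "finite A \<Longrightarrow> i \<in> A \<Longrightarrow> m i \<le> sum m A"
  using m_nonneg by (intro member_le_sum) auto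

lemma weighted_sum_mono: "finite B \<Longrightarrow> A \<subseteq> B \<Longrightarrow> weighted_sum m g A \<le> weighted_sum m g B"
  unfolding weighted_sum_def by (intro sum_mono2) (simp_all add: m_nonneg)

lemma weighted_mean_le:
  assumes "finite A" "A \<noteq> {}" "weighted_sum m g A \<le> r * sum m A"
  shows "weighted_mean m g A \<le> ennreal r"
  unfolding weighted_mean_def using assms sum_pos_nonempty[OF assms(1,2)]
  by (intro ennreal_leI) (simp add: divide_le_eq)

lemma weighted_mean_ge:
  assumes "finite A" "A \<noteq> {}" "r * sum m A \<le> weighted_sum m g A"
  shows "ennreal r \<le> weighted_mean m g A"
  unfolding weighted_mean_def using assms sum_pos_nonempty[OF assms(1,2)]
  by (intro ennreal_leI) (simp add: le_divide_eq)

lemma SUP_weighted_mean_le: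
  assumes "\<And>A. A \<in> F \<Longrightarrow> finite A \<and> A \<noteq> {} \<and> weighted_sum m g A \<le> r * sum m A"
  shows "(SUP A\<in>F. weighted_mean m g A) \<le> ennreal r"
  using assms weighted_mean_le by (intro SUP_least) blast

lemma level_dist_ge: "i \<noteq> j \<Longrightarrow> 2 * real (max (level i) (level j)) + 2 \<le> level_dist c i j"
  by (simp add: level_dist_def c_nonneg)

lemma level_dist_le: "i \<noteq> j \<Longrightarrow> level_dist c i j \<le> 2 * real (max (level i) (level j)) + 3"
  by (simp add: level_dist_def c_le_one)

lemma level_dist_nonneg: "0 \<le> level_dist c i j"
  using level_dist_ge[of i j] by (cases "i = j") auto

lemma level_dist_triangle: "level_dist c i k \<le> level_dist c i j + level_dist c j k"
proof (cases "i = k \<or> j = i \<or> j = k")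
  case True
  then show ?thesis using level_dist_nonneg by auto
next
  case False
  have "real (max (level i) (level k)) \<le> real (max (level i) (level j)) + real (max (level j) (level k))"
    by auto
  then show ?thesis
    using level_dist_le[of i k] level_dist_ge[of i j] level_dist_ge[of j k] False by linarith
qed

sublocale Metric_space \<nat> \<rho>
proof
  fix x y z
  show "0 \<le> \<rho> x y" by (simp add: level_metric_def level_dist_nonneg)
  show "\<rho> x y = \<rho> y x" by (simp add: level_metric_def level_dist_def c_sym max.commute)
  show "\<rho> x z \<le> \<rho> x y + \<rho> y z" by (simp add: level_metric_def level_dist_triangle)
  assume "x \<in> \<nat>" "y \<in> \<nat>"
  then show "\<rho> x y = 0 \<longleftrightarrow> x = y"
    using level_dist_ge by (auto simp: Nats_iff_real level_metric_def) fastforce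
qed

lemma mball_level_metric: "mball (real i) r = real ` level_ball c i r"
  by (auto simp: mball_def level_ball_def level_metric_def Nats_iff_real)

lemma finite_level_ball: "finite (level_ball c i r)"
proof -
  have "level_ball c i r \<subseteq> insert i {j. real j < r}"
  proof
    fix j assume j: "j \<in> level_ball c i r"
    show "j \<in> insert i {j. real j < r}"
    proof (cases "j = i")
      case False
      have "real j \<le> 2 * real (max (level i) (level j)) + 1"
        unfolding level_def by (simp add: max_def) linarith
      then show ?thesis
        using j level_dist_ge[OF False[symmetric]] by (simp add: level_ball_def)
    qed simp
  qed
  moreover have "{j. real j < r} \<subseteq> {..nat \<lceil>r\<rceil>}"
    by auto linarith
  ultimately show ?thesis
    by (meson finite_atMost finite_insert finite_subset)
qed

lemma level_ball_one: "level_ball c i 1 = {i}"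
proof -
  have "\<not> level_dist c i j < 1" if "j \<noteq> i" for j
    using level_dist_ge[of i j] that by simp
  then show ?thesis by (auto simp: level_ball_def)
qed

lemma metric_borel_level_metric: "metric_borel \<nat> \<rho> = Pow \<nat>"
proof
  show "metric_borel \<nat> \<rho> \<subseteq> Pow \<nat>"
    unfolding metric_borel_def using openin_subset sigma_sets_into_sp
    by (metis (mono_tags, lifting) Pow_iff mem_Collect_eq subsetI topspace_mtopology)
  show "Pow \<nat> \<subseteq> metric_borel \<nat> \<rho>"
  proof
    fix A :: "real set" assume "A \<in> Pow \<nat>"
    then have A: "A = (\<Union>n. if real n \<in> A then {real n} else {})"
      by (auto simp: Nats_def split: if_splits)
    have "openin mtopology {real n}" for n
      using openin_mball[of "real n" 1] by (simp add: mball_level_metric level_ball_one)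
    then have "(if real n \<in> A then {real n} else {}) \<in> metric_borel \<nat> \<rho>" for n
      unfolding metric_borel_def by (auto intro: sigma_sets.Basic sigma_sets.Empty)
    then have "(\<Union>n. if real n \<in> A then {real n} else {}) \<in> metric_borel \<nat> \<rho>"
      unfolding metric_borel_def by (intro sigma_sets.Union) auto
    then show "A \<in> metric_borel \<nat> \<rho>"
      using A by simp
  qed
qed

lemma emeasure_real_image:
  assumes "finite A" shows "emeasure \<mu> (real ` A) = ennreal (sum m A)"
proof -
  have "emeasure \<mu> (real ` A) = (\<Sum>x\<in>real ` A. ennreal (m (nat \<lfloor>x\<rfloor>)))"
    unfolding weighted_measure_def by (rule emeasure_point_measure_finite2) (auto simp: assms)
  also have "\<dots> = (\<Sum>j\<in>A. ennreal (m j))"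
    by (subst sum.reindex) (auto simp: inj_on_def)
  also have "\<dots> = ennreal (sum m A)"
    using m_nonneg by (intro sum_ennreal)
  finally show ?thesis .
qed

lemma nn_integral_real_image:
  assumes "finite A"
  shows "(\<integral>\<^sup>+ y. ennreal \<bar>f y\<bar> * indicator (real ` A) y \<partial>\<mu>) = ennreal (weighted_sum m (\<lambda>j. f (real j)) A)"
proof -
  let ?g = "\<lambda>y. ennreal \<bar>f y\<bar> * indicator (real ` A) y"
  let ?w = "\<lambda>x. ennreal (m (nat \<lfloor>x\<rfloor>))"
  have fin: "finite {a \<in> \<nat>. 0 < ?w a \<and> 0 < ?g a}"
    by (rule finite_subset[of _ "real ` A"]) (auto simp: assms split: split_indicator)
  have "integral\<^sup>N \<mu> ?g = (\<Sum>a | a \<in> \<nat> \<and> 0 < ?w a \<and> 0 < ?g a. ?w a * ?g a)"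
    unfolding weighted_measure_def by (rule nn_integral_point_measure[OF fin])
  also have "\<dots> = (\<Sum>a\<in>real ` A. ?w a * ?g a)"
    using m_pos by (intro sum.mono_neutral_left) (auto simp: assms Nats_iff_real split: split_indicator)
  also have "\<dots> = (\<Sum>j\<in>A. ennreal (\<bar>f (real j)\<bar> * m j))"
    using m_nonneg by (subst sum.reindex) (auto simp: inj_on_def ennreal_mult'' mult.commute)
  also have "\<dots> = ennreal (weighted_sum m (\<lambda>j. f (real j)) A)"
    unfolding weighted_sum_def using m_nonneg by (intro sum_ennreal) simp
  finally show ?thesis .
qed

lemma ball_avg_real_image:
  assumes "finite A" "A \<noteq> {}"
  shows "ball_avg \<mu> (real ` A) f = weighted_mean m (\<lambda>j. f (real j)) A"
  unfolding ball_avg_def weighted_mean_def nn_integral_real_image[OF assms(1)] emeasure_real_image[OF assms(1)]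
  using sum_pos_nonempty[OF assms] weighted_sum_nonneg by (simp add: divide_ennreal)

lemma metric_measure_space_level: "metric_measure_space \<nat> \<rho> \<mu>"
  unfolding metric_measure_space_def
proof (intro conjI ballI allI impI)
  show "\<nat> \<noteq> {}" by auto
  show "Metric_space \<nat> \<rho>" by unfold_locales
  show "space \<mu> = \<nat>" by simp
  show "sets \<mu> = metric_borel \<nat> \<rho>" by (simp add: metric_borel_level_metric)
  fix x :: real and r :: real assume "x \<in> \<nat>" "0 < r"
  then obtain i where "x = real i" "i \<in> level_ball c i r"
    by (auto simp: Nats_iff_real center_in_level_ball)
  then show "0 < emeasure \<mu> (mball x r)" "emeasure \<mu> (mball x r) < \<infinity>"
    using sum_pos_nonempty[OF finite_level_ball]
    by (auto simp: mball_level_metric emeasure_real_image finite_level_ball)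
qed

lemma mem_L1loc: "f \<in> L1loc \<nat> \<rho> \<mu>"
  unfolding L1loc_def
proof (intro CollectI conjI ballI allI impI)
  show "f \<in> borel_measurable \<mu>"
    by (simp add: weighted_measure_def)
  fix x :: real and r :: real assume "x \<in> \<nat>"
  then obtain i where "x = real i" by (auto simp: Nats_iff_real)
  then show "(\<integral>\<^sup>+ y. ennreal \<bar>f y\<bar> * indicator (mball x r) y \<partial>\<mu>) < \<infinity>"
    using nn_integral_real_image[OF finite_level_ball] by (simp only: mball_level_metric) simp
qed

lemma real_notin_null_set: "N \<in> null_sets \<mu> \<Longrightarrow> real i \<notin> N"
proof
  assume "N \<in> null_sets \<mu>" "real i \<in> N"
  then have "emeasure \<mu> {real i} \<le> emeasure \<mu> N"
    using null_setsD2[of N \<mu>] by (intro emeasure_mono) auto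
  moreover have "emeasure \<mu> {real i} = ennreal (m i)"
    using emeasure_real_image[of "{i}"] by simp
  ultimately show False
    using null_setsD1[OF \<open>N \<in> null_sets \<mu>\<close>] m_pos[of i] by simp
qed

lemma dichotomy_iff_infinity_propagates:
  assumes T: "\<And>f i. T f (real i) = (SUP A\<in>F i. weighted_mean m (\<lambda>j. f (real j)) A)"
  shows "dichotomy \<nat> \<rho> \<mu> T \<longleftrightarrow> infinity_propagates m F"
proof
  assume dichotomy: "dichotomy \<nat> \<rho> \<mu> T"
  show "infinity_propagates m F"
    unfolding infinity_propagates_def
  proof (intro allI impI)
    fix g i j assume infinite: "(SUP A\<in>F i. weighted_mean m g A) = \<infinity>"
    define f where "f x = g (nat \<lfloor>x\<rfloor>)" for x :: real
    have Tf: "T f (real k) = (SUP A\<in>F k. weighted_mean m g A)" for k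
      by (simp add: T f_def)
    have "real i \<in> {x \<in> \<nat>. T f x = \<infinity>}"
      using infinite Tf by simp
    then have "{x \<in> \<nat>. T f x = \<infinity>} = \<nat>"
      using dichotomy mem_L1loc real_notin_null_set unfolding dichotomy_def by blast
    then have "T f (real j) = \<infinity>"
      by (metis (mono_tags, lifting) mem_Collect_eq of_nat_in_Nats)
    then show "(SUP A\<in>F j. weighted_mean m g A) = \<infinity>"
      by (metis Tf)
  qed
next
  assume propagates: "infinity_propagates m F"
  show "dichotomy \<nat> \<rho> \<mu> T"
    unfolding dichotomy_def
  proof
    fix f
    show "(\<exists>N\<in>null_sets \<mu>. {x \<in> \<nat>. T f x = \<infinity>} \<subseteq> N) \<or> {x \<in> \<nat>. T f x = \<infinity>} = \<nat>"
    proof (cases "\<exists>i. T f (real i) = \<infinity>")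
      case True
      then have "T f (real j) = \<infinity>" for j
        using propagates by (auto simp: infinity_propagates_def T)
      then show ?thesis by (auto simp: Nats_iff_real)
    next
      case False
      then have "{x \<in> \<nat>. T f x = \<infinity>} = {}"
        by (auto simp: Nats_iff_real)
      then show ?thesis by auto
    qed
  qed
qed

lemma maxc_level: "maxc \<nat> \<rho> \<mu> f (real i) = (SUP A\<in>centered_balls c i. weighted_mean m (\<lambda>j. f (real j)) A)"
  unfolding maxc_def centered_balls_def image_image greaterThan_def
proof (intro SUP_cong refl)
  fix r :: real assume "r \<in> {r. 0 < r}"
  then have "level_ball c i r \<noteq> {}"
    using center_in_level_ball by force
  then show "ball_avg \<mu> (mball (real i) r) f = weighted_mean m (\<lambda>j. f (real j)) (level_ball c i r)"
    by (simp add: mball_level_metric ball_avg_real_image finite_level_ball)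
qed

lemma maxnc_level: "maxnc \<nat> \<rho> \<mu> f (real i) = (SUP A\<in>balls_through c i. weighted_mean m (\<lambda>j. f (real j)) A)"
proof -
  let ?P = "{(k, r). 0 < r \<and> i \<in> level_ball c k r}"
  have balls: "{(y, r). y \<in> \<nat> \<and> 0 < r \<and> real i \<in> mball y r} = (\<lambda>(k, r). (real k, r)) ` ?P"
    by (auto simp: mball_def Nats_iff_real image_iff level_metric_def level_ball_def)
  have "balls_through c i = (\<lambda>(k, r). level_ball c k r) ` ?P"
    by (auto simp: balls_through_def)
  then have "(SUP A\<in>balls_through c i. weighted_mean m (\<lambda>j. f (real j)) A)
      = (SUP p\<in>?P. weighted_mean m (\<lambda>j. f (real j)) (level_ball c (fst p) (snd p)))"
    by (simp add: image_image case_prod_beta')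
  also have "\<dots> = maxnc \<nat> \<rho> \<mu> f (real i)"
    unfolding maxnc_def balls image_image
  proof (intro SUP_cong refl)
    fix p assume "p \<in> ?P"
    then have "level_ball c (fst p) (snd p) \<noteq> {}" by auto
    then show "weighted_mean m (\<lambda>j. f (real j)) (level_ball c (fst p) (snd p)) =
        (case case p of (k, r) \<Rightarrow> (real k, r) of (y, r) \<Rightarrow> ball_avg \<mu> (mball y r) f)"
      by (simp add: case_prod_beta' mball_level_metric ball_avg_real_image finite_level_ball)
  qed
  finally show ?thesis ..
qed

lemma dichotomy_maxc_iff: "dichotomy \<nat> \<rho> \<mu> (maxc \<nat> \<rho> \<mu>) \<longleftrightarrow> infinity_propagates m (centered_balls c)"
  by (rule dichotomy_iff_infinity_propagates) (rule maxc_level)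

lemma dichotomy_maxnc_iff: "dichotomy \<nat> \<rho> \<mu> (maxnc \<nat> \<rho> \<mu>) \<longleftrightarrow> infinity_propagates m (balls_through c)"
  by (rule dichotomy_iff_infinity_propagates) (rule maxnc_level)

lemma weighted_mean_le_superset:
  assumes "finite A'" "A \<subseteq> A'" "A \<noteq> {}" "0 \<le> C" "sum m A' \<le> C * sum m A"
  shows "weighted_mean m g A \<le> ennreal C * weighted_mean m g A'"
proof -
  have "finite A" "A' \<noteq> {}"
    using assms(1-3) finite_subset by auto
  then have pos: "0 < sum m A" "0 < sum m A'"
    using sum_pos_nonempty assms(1,3) by auto
  have "weighted_sum m g A / sum m A \<le> weighted_sum m g A' / sum m A"
    using weighted_sum_mono[OF assms(1,2)] pos by (simp add: divide_right_mono)
  also have "\<dots> \<le> C * (weighted_sum m g A' / sum m A')"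
  proof -
    have "weighted_sum m g A' * sum m A' \<le> C * weighted_sum m g A' * sum m A"
      using mult_left_mono[OF assms(5) weighted_sum_nonneg] by (simp add: algebra_simps)
    then show ?thesis using pos by (simp add: field_simps)
  qed
  finally show ?thesis
    unfolding weighted_mean_def using assms(4) pos weighted_sum_nonneg
    by (simp add: ennreal_mult[symmetric] ennreal_leI)
qed

text \<open>Means over sets inside \<open>D\<close> are bounded since these sets contain \<open>i\<close>, whose weight is positive.\<close>
lemma SUP_weighted_mean_transfer:
  assumes F_i: "\<And>A. A \<in> F i \<Longrightarrow> finite A \<and> i \<in> A" and F_j: "\<And>A. A \<in> F j \<Longrightarrow> finite A"
    and "finite D" "0 \<le> C"
    and absorb: "\<And>A. A \<in> F i \<Longrightarrow> A \<subseteq> D \<or> (\<exists>A'\<in>F j. A \<subseteq> A' \<and> sum m A' \<le> C * sum m A)"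
    and infinite: "(SUP A\<in>F i. weighted_mean m g A) = \<infinity>"
  shows "(SUP A\<in>F j. weighted_mean m g A) = \<infinity>"
proof -
  let ?S = "SUP A\<in>F j. weighted_mean m g A"
  have "weighted_mean m g A \<le> max (ennreal (weighted_sum m g D / m i)) (ennreal C * ?S)" if A: "A \<in> F i" for A
  proof -
    have A_fin: "finite A" "A \<noteq> {}" and "m i \<le> sum m A"
      using F_i[OF A] member_le_sum_weights by auto
    from absorb[OF A] show ?thesis
    proof
      assume "A \<subseteq> D"
      then have "weighted_sum m g A \<le> weighted_sum m g D / m i * m i"
        using weighted_sum_mono[OF \<open>finite D\<close>] m_pos[of i] by simp
      also have "\<dots> \<le> weighted_sum m g D / m i * sum m A"
        using \<open>m i \<le> sum m A\<close> m_pos[of i] weighted_sum_nonneg[of g D] by (intro mult_left_mono) simp_all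
      finally show ?thesis
        using weighted_mean_le[OF A_fin] by (simp add: le_max_iff_disj)
    next
      assume "\<exists>A'\<in>F j. A \<subseteq> A' \<and> sum m A' \<le> C * sum m A"
      then obtain A' where A': "A' \<in> F j" "A \<subseteq> A'" "sum m A' \<le> C * sum m A" by blast
      have "weighted_mean m g A \<le> ennreal C * weighted_mean m g A'"
        using F_j[OF A'(1)] A'(2) A_fin(2) \<open>0 \<le> C\<close> A'(3) by (rule weighted_mean_le_superset)
      also have "\<dots> \<le> ennreal C * ?S"
        using A'(1) by (intro mult_left_mono SUP_upper) simp_all
      finally show ?thesis by (simp add: le_max_iff_disj)
    qed
  qed
  then have "(SUP A\<in>F i. weighted_mean m g A) \<le> max (ennreal (weighted_sum m g D / m i)) (ennreal C * ?S)"
    by (rule SUP_least)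
  then have "ennreal C * ?S = \<infinity>"
    using infinite by (auto simp: top_unique max_def split: if_splits)
  then show ?thesis
    by (simp add: ennreal_mult_eq_top_iff)
qed

lemma balls_through_finite: "A \<in> balls_through c i \<Longrightarrow> finite A \<and> i \<in> A"
  by (auto simp: balls_through_def finite_level_ball)

lemma level_ball_in_balls_through: "0 < r \<Longrightarrow> i \<in> level_ball c k r \<Longrightarrow> level_ball c k r \<in> balls_through c i"
  by (auto simp: balls_through_def)

lemma centered_balls_subset: "centered_balls c i \<subseteq> balls_through c i"
  unfolding centered_balls_def balls_through_def using center_in_level_ball by fastforce

lemma obtain_ball_top_level:
  assumes "A \<in> balls_through c i"
  obtains k r K z where "0 < r" "A = level_ball c k r" "i \<in> A" "finite A" "A \<noteq> {}"
    "A \<subseteq> {..<2 * K + 2}" "z \<in> A" "level z = K"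
proof -
  obtain k r where kr: "0 < r" "A = level_ball c k r" "i \<in> A"
    using assms by (auto simp: balls_through_def)
  moreover have "finite A" "A \<noteq> {}"
    using kr finite_level_ball by auto
  moreover obtain K z where "A \<subseteq> {..<2 * K + 2}" "z \<in> A" "level z = K"
    using obtain_top_level[OF \<open>finite A\<close> \<open>A \<noteq> {}\<close>] .
  ultimately show ?thesis using that by blast
qed

lemma level_ball_lower_levels:
  assumes "level j \<le> K" shows "level_ball c j (2 * real K + 4) = {..<2 * K + 2}"
proof (intro set_eqI iffI)
  fix w assume w: "w \<in> level_ball c j (2 * real K + 4)"
  show "w \<in> {..<2 * K + 2}"
  proof (cases "w = j")
    case False
    then have "2 * real (max (level j) (level w)) + 2 < 2 * K + 4"
      using w level_dist_ge[of j w] by (simp add: level_ball_def)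
    moreover have "real (level w) \<le> real (max (level j) (level w))" by simp
    ultimately have "level w \<le> K" by linarith
    then show ?thesis by (simp add: level_le_iff)
  qed (use assms level_le_iff in simp)
next
  fix w assume "w \<in> {..<2 * K + 2}"
  then have "level w \<le> K" by (simp add: level_le_iff)
  then show "w \<in> level_ball c j (2 * real K + 4)"
    using assms level_dist_le[of j w] by (cases "w = j") (auto simp: level_ball_def)
qed

lemma level_ball_cases:
  assumes "0 < r" "level_ball c k r \<subseteq> {..<2 * K + 2}" "z \<in> level_ball c k r" "level z = K"
  shows "{..<2 * K} \<subseteq> level_ball c k r \<or> (level k = K \<and> r \<le> 2 * real K + 3)"
proof (rule disjCI)
  assume not_small: "\<not> (level k = K \<and> r \<le> 2 * real K + 3)"
  have k_level: "level k \<le> K"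
    using assms(2) center_in_level_ball[OF assms(1)] by (auto simp: level_le_iff)
  show "{..<2 * K} \<subseteq> level_ball c k r"
  proof
    fix w assume "w \<in> {..<2 * K}"
    then have w_level: "level w < K" by (simp add: level_less_iff)
    show "w \<in> level_ball c k r"
    proof (cases "w = k")
      case False
      have "level_dist c k w \<le> 2 * real (max (level k) (level w)) + 3"
        using level_dist_le False by auto
      moreover have "r > 2 * real K + 3 \<or> (level k < K \<and> 2 * real K + 2 < r)"
      proof (cases "r > 2 * real K + 3")
        case False
        then have "level k < K" using not_small k_level by linarith
        then have "2 * real K + 2 \<le> level_dist c k z"
          using level_dist_ge[of k z] assms(4) by fastforce
        then show ?thesis using assms(3) \<open>level k < K\<close> by (simp add: level_ball_def)
      qed simp
      moreover have "real (max (level k) (level w)) \<le> real K"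
        and "level k < K \<Longrightarrow> real (max (level k) (level w)) + 1 \<le> real K"
        using k_level w_level by (auto simp: max_def)
      ultimately have "level_dist c k w < r"
        by linarith
      then show ?thesis by (simp add: level_ball_def)
    qed (use assms(1) center_in_level_ball in simp)
  qed
qed

lemma small_level_ball:
  assumes "level k = K" "r \<le> 2 * real K + 3" "w \<in> level_ball c k r" "w \<noteq> k"
  shows "level w \<le> K \<and> 2 * real K + 2 + c k w < r"
proof -
  have dist: "level_dist c k w = 2 * real (max K (level w)) + 2 + c k w"
    using level_dist_neq assms(1,4) by metis
  have "level_dist c k w < r"
    using assms(3) by (simp add: level_ball_def)
  then have "level w \<le> K"
    using dist c_nonneg[of k w] assms(2) by (simp add: max_def split: if_splits)
  then show ?thesis
    using dist \<open>level_dist c k w < r\<close> by (simp add: max_def)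
qed

lemma infinity_propagates_if_lower_levels_absorbed:
  assumes doubling_levels: "\<And>K. 1 \<le> K \<Longrightarrow> sum m {..<2 * K + 2} \<le> 2 * sum m {..<2 * K}"
    and F_balls: "\<And>i. F i \<subseteq> balls_through c i"
    and F_large: "\<And>j K. level j \<le> K \<Longrightarrow> level_ball c j (2 * real K + 4) \<in> F j"
    and F_lower: "\<And>i A K z. A \<in> F i \<Longrightarrow> A \<subseteq> {..<2 * K + 2} \<Longrightarrow> z \<in> A \<Longrightarrow> level z = K \<Longrightarrow>
        level i < K \<Longrightarrow> {..<2 * K} \<subseteq> A"
  shows "infinity_propagates m F"
  unfolding infinity_propagates_def
proof (intro allI impI)
  fix g i j assume infinite: "(SUP A\<in>F i. weighted_mean m g A) = \<infinity>"
  define M where "M = max (level i) (level j)"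
  have F_finite: "finite A \<and> k \<in> A" if "A \<in> F k" for A k
    using F_balls balls_through_finite that by blast
  show "(SUP A\<in>F j. weighted_mean m g A) = \<infinity>"
  proof (rule SUP_weighted_mean_transfer[of F i j "{..<2 * M + 2}" 2])
    fix A assume A: "A \<in> F i"
    show "A \<subseteq> {..<2 * M + 2} \<or> (\<exists>A'\<in>F j. A \<subseteq> A' \<and> sum m A' \<le> 2 * sum m A)"
    proof (cases "A \<subseteq> {..<2 * M + 2}")
      case not_low: False
      obtain K z where K: "A \<subseteq> {..<2 * K + 2}" "z \<in> A" "level z = K"
        using obtain_top_level F_finite[OF A] by blast
      have "M < K"
        using top_level_gt[OF not_low K(1)] .
      then have lower: "{..<2 * K} \<subseteq> A"
        using F_lower[OF A K] by (simp add: M_def)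
      have "level j \<le> K"
        using \<open>M < K\<close> by (simp add: M_def)
      note large = level_ball_lower_levels[OF this]
      have "sum m {..<2 * K + 2} \<le> 2 * sum m A"
        using doubling_levels[of K] sum_mono_subset[OF _ lower] F_finite[OF A] \<open>M < K\<close> by fastforce
      then show ?thesis
        using F_large[OF \<open>level j \<le> K\<close>] large K(1) by auto
    qed simp
  qed (use F_finite infinite in auto)
qed

lemma infinity_propagates_centered_balls:
  assumes "\<And>K. 1 \<le> K \<Longrightarrow> sum m {..<2 * K + 2} \<le> 2 * sum m {..<2 * K}"
  shows "infinity_propagates m (centered_balls c)"
proof (rule infinity_propagates_if_lower_levels_absorbed[OF assms])
  show "centered_balls c i \<subseteq> balls_through c i" for i
    by (rule centered_balls_subset)
  show "level_ball c j (2 * real K + 4) \<in> centered_balls c j" for j and K :: nat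
    unfolding centered_balls_def by (rule imageI) simp
  fix i A K z
  assume A: "A \<in> centered_balls c i" and K: "A \<subseteq> {..<2 * K + 2}" "z \<in> A" "level z = K" "level i < K"
  then obtain r where "0 < r" "A = level_ball c i r"
    by (auto simp: centered_balls_def)
  then show "{..<2 * K} \<subseteq> A"
    using level_ball_cases[of r i K z] K by auto
qed

lemma infinity_propagates_balls_through_unperturbed:
  assumes "\<And>K. 1 \<le> K \<Longrightarrow> sum m {..<2 * K + 2} \<le> 2 * sum m {..<2 * K}"
    and c_one: "\<And>i j. c i j = 1"
  shows "infinity_propagates m (balls_through c)"
proof (rule infinity_propagates_if_lower_levels_absorbed[OF assms(1) subset_refl])
  show "level_ball c j (2 * real K + 4) \<in> balls_through c j" for j and K :: nat
    by (rule level_ball_in_balls_through) (simp_all add: center_in_level_ball)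
  fix i A K z
  assume A: "A \<in> balls_through c i" and K: "A \<subseteq> {..<2 * K + 2}" "z \<in> A" "level z = K" "level i < K"
  then obtain k r where kr: "0 < r" "A = level_ball c k r" "i \<in> A"
    by (auto simp: balls_through_def)
  have "\<not> (level k = K \<and> r \<le> 2 * real K + 3)"
  proof
    assume small: "level k = K \<and> r \<le> 2 * real K + 3"
    then have "2 * real K + 2 + c k i < r"
      using small_level_ball kr K(4) by (metis less_irrefl)
    then show False using small c_one[of k i] by linarith
  qed
  then show "{..<2 * K} \<subseteq> A"
    using level_ball_cases[OF kr(1)] K kr(2) by blast
qed

lemma not_doubling:
  assumes even_mass: "\<And>k. m (2 * k) = 1" and odd_mass_unbounded: "\<And>C. \<exists>k. C < m (2 * k + 1)"
  shows "\<not> doubling \<nat> \<rho> \<mu>"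
proof
  assume "doubling \<nat> \<rho> \<mu>"
  then obtain C :: real where C: "\<And>x s. x \<in> \<nat> \<Longrightarrow> 0 < s \<Longrightarrow>
      emeasure \<mu> (mball x (2 * s)) \<le> ennreal C * emeasure \<mu> (mball x s)"
    unfolding doubling_def by blast
  obtain k where k: "max C 0 < m (2 * k + 1)"
    using odd_mass_unbounded by blast
  let ?r = "2 * real k + 2"
  have "level_ball c (2 * k) ?r = {2 * k}"
  proof -
    have "\<not> level_dist c (2 * k) w < ?r" if "w \<noteq> 2 * k" for w
      using level_dist_ge[of "2 * k" w] that by (simp add: level_def)
    then show ?thesis by (auto simp: level_ball_def)
  qed
  then have small: "sum m (level_ball c (2 * k) ?r) = 1"
    by (simp add: even_mass)
  have "level_dist c (2 * k) (2 * k + 1) < 2 * ?r"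
    using level_dist_le[of "2 * k" "2 * k + 1"] by (simp add: level_def)
  then have "sum m {2 * k, 2 * k + 1} \<le> sum m (level_ball c (2 * k) (2 * ?r))"
    by (intro sum_mono_subset finite_level_ball) (auto simp: level_ball_def)
  then have large: "1 + m (2 * k + 1) \<le> sum m (level_ball c (2 * k) (2 * ?r))"
    by (simp add: even_mass)
  have "ennreal (sum m (level_ball c (2 * k) (2 * ?r))) \<le> ennreal C * ennreal (sum m (level_ball c (2 * k) ?r))"
    using C[of "real (2 * k)" ?r]
    by (simp only: mball_level_metric emeasure_real_image finite_level_ball) simp
  then have "sum m (level_ball c (2 * k) (2 * ?r)) \<le> max C 0"
    unfolding small by (auto simp: ennreal_le_iff2)
  then show False
    using large k m_pos[of "2 * k + 1"] by linarith
qed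

text \<open>The ball of radius \<open>2k + 5/2\<close> around the point \<open>2k\<close> is \<open>{0, 2k}\<close>: a link to \<open>0\<close>
  makes the far point \<open>2k\<close> reachable from \<open>0\<close> by balls of mass 2.\<close>
lemma SUP_balls_through_hub:
  assumes hub: "\<And>k. 1 \<le> k \<Longrightarrow> c (2 * k) 0 = 0"
    and unlinked: "\<And>k w. 1 \<le> k \<Longrightarrow> w \<notin> {0, 2 * k} \<Longrightarrow> c (2 * k) w = 1"
    and even_mass: "\<And>k. m (2 * k) = 1"
    and unbounded: "\<And>C. \<exists>k\<ge>1. C \<le> \<bar>g (2 * k)\<bar>"
  shows "(SUP A\<in>balls_through c 0. weighted_mean m g A) = \<infinity>"
proof (rule SUP_eq_infinity_ennrealI)
  fix C :: real
  obtain k where k: "1 \<le> k" "2 * C \<le> \<bar>g (2 * k)\<bar>"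
    using unbounded by blast
  have ball: "level_ball c (2 * k) (2 * real k + 5 / 2) = {0, 2 * k}"
  proof (intro set_eqI iffI)
    fix w assume w: "w \<in> level_ball c (2 * k) (2 * real k + 5 / 2)"
    show "w \<in> {0, 2 * k}"
    proof (rule ccontr)
      assume "w \<notin> {0, 2 * k}"
      then have "level_dist c (2 * k) w = 2 * real (max k (level w)) + 3"
        using level_dist_neq[of "2 * k" w c] unlinked[OF k(1)] by (simp add: level_def)
      moreover have "real k \<le> real (max k (level w))" by simp
      ultimately show False using w by (simp add: level_ball_def)
    qed
  next
    fix w assume "w \<in> {0, 2 * k}"
    moreover have "level_dist c (2 * k) 0 = 2 * real k + 2"
      using level_dist_neq[of "2 * k" 0 c] hub[OF k(1)] k(1) by (simp add: level_def)
    ultimately show "w \<in> level_ball c (2 * k) (2 * real k + 5 / 2)"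
      by (auto simp: level_ball_def)
  qed
  have "C * sum m {0, 2 * k} \<le> weighted_sum m g {0, 2 * k}"
    using k even_mass[of 0] even_mass[of k] by (simp add: weighted_sum_def)
  then have "ennreal C \<le> weighted_mean m g (level_ball c (2 * k) (2 * real k + 5 / 2))"
    unfolding ball by (intro weighted_mean_ge) auto
  moreover have "level_ball c (2 * k) (2 * real k + 5 / 2) \<in> balls_through c 0"
    by (rule level_ball_in_balls_through) (auto simp: ball)
  ultimately show "\<exists>A\<in>balls_through c 0. ennreal C \<le> weighted_mean m g A" by blast
qed

end

text \<open>The odd point of level \<open>k\<close> tops the mass of that level up to \<open>T (k + 1) - T k\<close>, so that
  with \<open>T 1 = 2\<close> the levels below \<open>K\<close> weigh \<open>T K\<close>.\<close>
definition level_mass :: "(nat \<Rightarrow> real) \<Rightarrow> nat \<Rightarrow> real" where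
  "level_mass T j = (if j < 2 \<or> even j then 1 else T (level j + 1) - T (level j) - 1)"

definition geometric_mass :: "nat \<Rightarrow> real" where
  "geometric_mass = level_mass (\<lambda>k. 2 ^ k)"

definition factorial_mass :: "nat \<Rightarrow> real" where
  "factorial_mass = level_mass (\<lambda>k. 2 * fact k)"

lemma level_mass_even [simp]: "level_mass T (2 * k) = 1"
  by (simp add: level_mass_def)

lemma level_mass_odd: "1 \<le> k \<Longrightarrow> level_mass T (2 * k + 1) = T (k + 1) - T k - 1"
  by (simp add: level_mass_def level_def)

lemma level_mass_pos:
  assumes "\<And>k. 1 \<le> k \<Longrightarrow> T k + 1 < T (k + 1)" shows "0 < level_mass T j"
proof (cases "j < 2 \<or> even j")
  case False
  define k where "k = j div 2"
  have "j = 2 * k + 1" "1 \<le> k"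
    using False unfolding k_def by presburger+
  then show ?thesis using assms[of k] level_mass_odd[of k T] by simp
qed (simp add: level_mass_def)

lemma sum_level_mass:
  assumes "T 1 = 2" "1 \<le> K" shows "sum (level_mass T) {..<2 * K} = T K"
  using assms(2)
proof (induction K rule: dec_induct)
  case base
  have "{..<2::nat} = {0, 1}" by auto
  then show ?case using assms(1) by (simp add: level_mass_def)
next
  case (step K)
  have "{..<2 * Suc K} = insert (2 * K + 1) (insert (2 * K) {..<2 * K})" by auto
  then show ?case using step level_mass_odd[OF step(1), of T] by simp
qed

lemma geometric_mass_pos: "0 < geometric_mass j"
proof -
  have "(2::real) ^ k + 1 < 2 ^ (k + 1)" if "1 \<le> k" for k
    using one_less_power[of 2 k] that by simp
  then show ?thesis unfolding geometric_mass_def by (intro level_mass_pos)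
qed

lemma factorial_mass_pos: "0 < factorial_mass j"
proof -
  have "2 * fact k + 1 < 2 * (fact (k + 1) :: real)" if "1 \<le> k" for k
  proof -
    have "1 * 1 \<le> real k * (fact k :: real)"
      using that by (intro mult_mono) auto
    then have "2 * (fact k :: real) + 1 < 2 * fact k + 2 * real k * fact k"
      by simp
    then show ?thesis by (simp add: algebra_simps)
  qed
  then show ?thesis unfolding factorial_mass_def by (intro level_mass_pos)
qed

lemma sum_geometric_mass: "1 \<le> K \<Longrightarrow> sum geometric_mass {..<2 * K} = 2 ^ K"
  unfolding geometric_mass_def by (rule sum_level_mass) simp

lemma sum_factorial_mass: "1 \<le> K \<Longrightarrow> sum factorial_mass {..<2 * K} = 2 * fact K"
  unfolding factorial_mass_def by (rule sum_level_mass) simp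

lemma geometric_mass_odd: "1 \<le> k \<Longrightarrow> geometric_mass (2 * k + 1) = 2 ^ k - 1"
  unfolding geometric_mass_def by (subst level_mass_odd) simp_all

lemma factorial_mass_odd: "1 \<le> k \<Longrightarrow> factorial_mass (2 * k + 1) = 2 * real k * fact k - 1"
  unfolding factorial_mass_def by (subst level_mass_odd) (simp_all add: algebra_simps)

definition link_perturbation :: "(nat \<Rightarrow> nat \<Rightarrow> bool) \<Rightarrow> nat \<Rightarrow> nat \<Rightarrow> real" where
  "link_perturbation L i j = (if L i j \<or> L j i then 0 else 1)"

locale geometric_space = level_space c geometric_mass for c

locale factorial_space = level_space c factorial_mass for c

lemma geometric_space_link: "geometric_space (link_perturbation L)"
  by unfold_locales (auto simp: link_perturbation_def geometric_mass_pos)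

lemma factorial_space_link: "factorial_space (link_perturbation L)"
  by unfold_locales (auto simp: link_perturbation_def factorial_mass_pos)

lemma sum_fact_le: "1 \<le> K \<Longrightarrow> (\<Sum>k\<le>K. fact k) \<le> (2 * fact K :: real)"
proof (induction K rule: dec_induct)
  case (step K)
  have "2 * fact K \<le> (real K + 1) * (fact K :: real)"
    using step(1) by (intro mult_right_mono) auto
  moreover have "fact (Suc K) = (real K + 1) * (fact K :: real)"
    by (simp add: algebra_simps)
  ultimately show ?case
    using step(3) by (simp only: sum.atMost_Suc)
qed simp

lemma sum_mult_fact: "(\<Sum>k\<le>K. real k * fact k) = fact (K + 1) - 1"
  by (induction K) (simp_all add: algebra_simps)

context geometric_space
begin

lemma geometric_doubling_levels: "1 \<le> K \<Longrightarrow> sum geometric_mass {..<2 * K + 2} \<le> 2 * sum geometric_mass {..<2 * K}"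
  using sum_geometric_mass[of "K + 1"] sum_geometric_mass[of K] by simp

lemma not_doubling_geometric: "\<not> doubling \<nat> \<rho> \<mu>"
proof (rule not_doubling)
  show "geometric_mass (2 * k) = 1" for k by (simp add: geometric_mass_def)
  fix C :: real
  define k where "k = nat \<lceil>C\<rceil> + 1"
  have "real k < 2 ^ k" by (rule of_nat_less_two_power)
  then have "C < geometric_mass (2 * k + 1)"
    unfolding k_def by (subst geometric_mass_odd) linarith+
  then show "\<exists>k. C < geometric_mass (2 * k + 1)" ..
qed

lemma sum_geometric_mass_ge_top_level:
  assumes one_unlinked: "\<And>k. 2 \<le> k \<Longrightarrow> c k 1 = 1"
    and A: "A \<in> balls_through c 1" "A \<subseteq> {..<2 * K + 2}" "z \<in> A" "level z = K"
  shows "2 ^ K \<le> sum geometric_mass A"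
proof -
  obtain k r where kr: "0 < r" "A = level_ball c k r" "1 \<in> A" "finite A"
    using A(1) by (auto simp: balls_through_def finite_level_ball)
  show ?thesis
  proof (cases "K = 0")
    case True
    then show ?thesis
      using member_le_sum_weights[OF kr(4,3)] by (simp add: geometric_mass_def level_mass_def)
  next
    case False
    have "{..<2 * K} \<subseteq> A \<or> (level k = K \<and> r \<le> 2 * real K + 3)"
      using level_ball_cases[OF kr(1)] A(2-4) kr(2) by blast
    then show ?thesis
    proof
      assume "{..<2 * K} \<subseteq> A"
      then have "sum geometric_mass {..<2 * K} \<le> sum geometric_mass A"
        by (rule sum_mono_subset[OF kr(4)])
      then show ?thesis
        using sum_geometric_mass[of K] False by simp
    next
      assume small: "level k = K \<and> r \<le> 2 * real K + 3"
      then have "2 \<le> k" "k \<noteq> 1"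
        using False by (auto simp: level_def)
      then have "2 * real K + 2 + c k 1 < r"
        using small_level_ball[of k K r 1] small kr by auto
      then show ?thesis
        using small one_unlinked[OF \<open>2 \<le> k\<close>] by linarith
    qed
  qed
qed

lemma SUP_balls_through_one_le_two:
  assumes one_unlinked: "\<And>k. 2 \<le> k \<Longrightarrow> c k 1 = 1"
  shows "(SUP A\<in>balls_through c 1. weighted_mean geometric_mass (even_supported (\<lambda>k. 2 ^ k)) A) \<le> ennreal 2"
proof (rule SUP_weighted_mean_le)
  fix A assume A: "A \<in> balls_through c 1"
  then obtain k r K z where "0 < r" "A = level_ball c k r" "1 \<in> A"
    and K: "finite A" "A \<noteq> {}" "A \<subseteq> {..<2 * K + 2}" "z \<in> A" "level z = K"
    by (rule obtain_ball_top_level)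
  have "weighted_sum geometric_mass (even_supported (\<lambda>k. 2 ^ k)) A
      \<le> weighted_sum geometric_mass (even_supported (\<lambda>k. 2 ^ k)) {..<2 * K + 2}"
    by (rule weighted_sum_mono[OF finite_lessThan K(3)])
  also have "\<dots> = (\<Sum>k\<le>K. \<bar>2 ^ k\<bar>)"
    by (rule weighted_sum_even_supported) (simp add: geometric_mass_def)
  also have "\<dots> = 2 * 2 ^ K - 1"
    by (induction K) simp_all
  also have "\<dots> \<le> 2 * sum geometric_mass A"
    using sum_geometric_mass_ge_top_level[OF one_unlinked A K(3-5)] by simp
  finally show "finite A \<and> A \<noteq> {} \<and>
      weighted_sum geometric_mass (even_supported (\<lambda>k. 2 ^ k)) A \<le> 2 * sum geometric_mass A"
    using K(1,2) by blast
qed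

lemma not_infinity_propagates_balls_through_hub:
  assumes hub: "\<And>k. 1 \<le> k \<Longrightarrow> c (2 * k) 0 = 0"
    and unlinked: "\<And>k w. 1 \<le> k \<Longrightarrow> w \<notin> {0, 2 * k} \<Longrightarrow> c (2 * k) w = 1"
    and one_unlinked: "\<And>k. 2 \<le> k \<Longrightarrow> c k 1 = 1"
  shows "\<not> infinity_propagates geometric_mass (balls_through c)"
proof (rule not_infinity_propagatesI)
  show "(SUP A\<in>balls_through c 0. weighted_mean geometric_mass (even_supported (\<lambda>k. 2 ^ k)) A) = \<infinity>"
  proof (rule SUP_balls_through_hub[OF hub unlinked])
    show "geometric_mass (2 * k) = 1" for k
      by (simp add: geometric_mass_def)
    fix C :: real
    have "C \<le> 2 ^ (nat \<lceil>C\<rceil> + 1)"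
      using of_nat_less_two_power[of "nat \<lceil>C\<rceil> + 1", where 'a = real] by linarith
    then show "\<exists>k\<ge>1. C \<le> \<bar>even_supported (\<lambda>k. 2 ^ k) (2 * k)\<bar>"
      by (intro exI[of _ "nat \<lceil>C\<rceil> + 1"]) (simp add: even_supported_def)
  qed
qed (rule SUP_balls_through_one_le_two[OF one_unlinked])

end

context factorial_space
begin

lemma not_doubling_factorial: "\<not> doubling \<nat> \<rho> \<mu>"
proof (rule not_doubling)
  show "factorial_mass (2 * k) = 1" for k by (simp add: factorial_mass_def)
  fix C :: real
  define k where "k = nat \<lceil>C\<rceil> + 1"
  have "1 \<le> (fact k :: real)" by simp
  then have "real k \<le> real k * fact k" by (simp add: mult_le_cancel_left1)
  then have "C < factorial_mass (2 * k + 1)"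
    unfolding k_def by (subst factorial_mass_odd) linarith+
  then show "\<exists>k. C < factorial_mass (2 * k + 1)" ..
qed

lemma sum_factorial_mass_le_odd:
  assumes "1 \<le> K" shows "sum factorial_mass {..<2 * K + 2} \<le> 4 * factorial_mass (2 * K + 1)"
proof -
  have "sum factorial_mass {..<2 * K + 2} = 2 * (real K + 1) * fact K"
    using sum_factorial_mass[of "K + 1"] by (simp add: algebra_simps)
  also have "\<dots> \<le> 4 * (2 * real K * fact K - 1)"
  proof -
    have "4 * 1 \<le> (6 * real K - 2) * (fact K :: real)"
      using assms by (intro mult_mono) auto
    then show ?thesis by (simp add: algebra_simps)
  qed
  also have "\<dots> = 4 * factorial_mass (2 * K + 1)"
    using factorial_mass_odd[OF assms] by simp
  finally show ?thesis .
qed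

text \<open>The mass of the odd point \<open>2K + 1\<close> is comparable to that of all lower levels, so small balls
  containing it can be absorbed by large balls around any other point.\<close>
lemma small_ball_contains_odd_point:
  assumes pairs: "\<And>k. 1 \<le> k \<Longrightarrow> c (2 * k) (2 * k + 1) = 0"
    and K: "1 \<le> K" "level k = K" "r \<le> 2 * real K + 3"
    and i: "i \<in> level_ball c k r" "i \<noteq> k"
  shows "2 * K + 1 \<in> level_ball c k r"
proof (cases "k = 2 * K + 1")
  case True
  have "0 < r"
    using i(1) level_dist_nonneg[of k i] by (simp add: level_ball_def)
  then show ?thesis using True center_in_level_ball by simp
next
  case False
  then have "k = 2 * K" using K(2) by (auto simp: level_def)
  moreover have "2 * real K + 2 + c k i < r"
    using small_level_ball K(2,3) i by blast
  ultimately show ?thesis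
    using level_dist_neq[of "2 * K" "2 * K + 1" c] pairs[OF K(1)] c_nonneg[of k i]
    by (simp add: level_ball_def level_def)
qed

lemma ball_absorbed_via_pairs:
  assumes pairs: "\<And>k. 1 \<le> k \<Longrightarrow> c (2 * k) (2 * k + 1) = 0"
    and A: "A \<in> balls_through c i" "\<not> A \<subseteq> {..<2 * max (level i) (level j) + 2}"
  shows "\<exists>A'\<in>balls_through c j. A \<subseteq> A' \<and> sum factorial_mass A' \<le> 4 * sum factorial_mass A"
proof -
  obtain k r K z where kr: "0 < r" "A = level_ball c k r" "i \<in> A" "finite A" "A \<noteq> {}"
    and K: "A \<subseteq> {..<2 * K + 2}" "z \<in> A" "level z = K"
    using A(1) by (rule obtain_ball_top_level)
  have "max (level i) (level j) < K"
    using top_level_gt[OF A(2) K(1)] .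
  then have ij: "level i < K" "j < 2 * K" "1 \<le> K"
    by (auto simp: level_less_iff[symmetric])
  have "{..<2 * K} \<subseteq> A \<or> (level k = K \<and> r \<le> 2 * real K + 3)"
    using level_ball_cases[OF kr(1)] K kr(2) by blast
  then show ?thesis
  proof
    assume "{..<2 * K} \<subseteq> A"
    then have "A \<in> balls_through c j"
      using kr ij(2) by (auto intro: level_ball_in_balls_through)
    then show ?thesis
      using sum_nonneg[of A factorial_mass] m_nonneg by (intro bexI[of _ A]) auto
  next
    assume small: "level k = K \<and> r \<le> 2 * real K + 3"
    then have "2 * K + 1 \<in> A"
      using small_ball_contains_odd_point[OF pairs ij(3), of k r i] ij(1) kr(2,3) by auto
    then have "factorial_mass (2 * K + 1) \<le> sum factorial_mass A"
      by (rule member_le_sum_weights[OF kr(4)])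
    then have "sum factorial_mass {..<2 * K + 2} \<le> 4 * sum factorial_mass A"
      using sum_factorial_mass_le_odd[OF ij(3)] by linarith
    moreover have "level_ball c j (2 * real K + 4) \<in> balls_through c j"
      by (rule level_ball_in_balls_through) (simp_all add: center_in_level_ball)
    moreover have "level j \<le> K"
      using ij(2) by (simp add: level_le_iff)
    ultimately show ?thesis
      using level_ball_lower_levels[of j K] K(1) by auto
  qed
qed

lemma infinity_propagates_balls_through_pairs:
  assumes pairs: "\<And>k. 1 \<le> k \<Longrightarrow> c (2 * k) (2 * k + 1) = 0"
  shows "infinity_propagates factorial_mass (balls_through c)"
  unfolding infinity_propagates_def
proof (intro allI impI)
  fix g i j assume infinite: "(SUP A\<in>balls_through c i. weighted_mean factorial_mass g A) = \<infinity>"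
  show "(SUP A\<in>balls_through c j. weighted_mean factorial_mass g A) = \<infinity>"
  proof (rule SUP_weighted_mean_transfer[of _ i j "{..<2 * max (level i) (level j) + 2}" 4])
    fix A assume "A \<in> balls_through c i"
    then show "A \<subseteq> {..<2 * max (level i) (level j) + 2} \<or>
        (\<exists>A'\<in>balls_through c j. A \<subseteq> A' \<and> sum factorial_mass A' \<le> 4 * sum factorial_mass A)"
      using ball_absorbed_via_pairs[OF pairs] by blast
  qed (use balls_through_finite infinite in auto)
qed

lemma level_ball_zero_below_odd_point:
  assumes odd_unlinked: "\<And>k. 1 \<le> k \<Longrightarrow> c 0 (2 * k + 1) = 1" and "1 \<le> k"
  shows "level_ball c 0 (2 * real k + 5 / 2) \<subseteq> insert (2 * k) {..<2 * k}"
proof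
  fix w assume w: "w \<in> level_ball c 0 (2 * real k + 5 / 2)"
  show "w \<in> insert (2 * k) {..<2 * k}"
  proof (cases "w = 0")
    case False
    have dist: "level_dist c 0 w = 2 * real (level w) + 2 + c 0 w"
      using level_dist_neq[of 0 w c] False by (simp add: level_def)
    then have "level w \<le> k"
      using w c_nonneg[of 0 w] by (simp add: level_ball_def)
    moreover have "w \<noteq> 2 * k + 1"
      using dist w odd_unlinked[OF \<open>1 \<le> k\<close>] by (auto simp: level_ball_def level_def)
    ultimately show ?thesis by (auto simp: level_le_iff)
  qed (use \<open>1 \<le> k\<close> in simp)
qed

lemma SUP_centered_balls_zero_infinite:
  assumes even_linked: "\<And>k. 1 \<le> k \<Longrightarrow> c 0 (2 * k) = 0"
    and odd_unlinked: "\<And>k. 1 \<le> k \<Longrightarrow> c 0 (2 * k + 1) = 1"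
  shows "(SUP A\<in>centered_balls c 0. weighted_mean factorial_mass (even_supported (\<lambda>k. real k * fact k)) A) = \<infinity>"
proof (rule SUP_eq_infinity_ennrealI)
  let ?g = "even_supported (\<lambda>k. real k * fact k)"
  fix C :: real
  define n where "n = nat \<lceil>C\<rceil>"
  define k where "k = 3 * n + 1"
  let ?A = "level_ball c 0 (2 * real k + 5 / 2)"
  have k: "1 \<le> k" by (simp add: k_def)
  have A_fin: "finite ?A" "?A \<noteq> {}"
    using finite_level_ball center_in_level_ball[of "2 * real k + 5 / 2" 0 c] by auto
  have "sum factorial_mass ?A \<le> sum factorial_mass (insert (2 * k) {..<2 * k})"
    using level_ball_zero_below_odd_point[OF odd_unlinked k] by (intro sum_mono_subset) auto
  also have "\<dots> \<le> 3 * fact k"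
    using sum_factorial_mass[OF k] by (simp add: factorial_mass_def)
  finally have mass: "sum factorial_mass ?A \<le> 3 * fact k" .
  have "level_dist c 0 (2 * k) = 2 * real k + 2"
    using level_dist_neq[of 0 "2 * k" c] even_linked[OF k] k by (simp add: level_def)
  then have "weighted_sum factorial_mass ?g {2 * k} \<le> weighted_sum factorial_mass ?g ?A"
    by (intro weighted_sum_mono A_fin) (simp add: level_ball_def)
  then have sum: "real k * fact k \<le> weighted_sum factorial_mass ?g ?A"
    by (simp add: weighted_sum_def even_supported_def factorial_mass_def)
  have "C * sum factorial_mass ?A \<le> real n * (3 * fact k)"
    using sum_pos_nonempty[OF A_fin] mass real_nat_ceiling_ge[of C]
    by (intro mult_mono) (simp_all add: n_def)
  also have "\<dots> \<le> real k * fact k"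
    by (simp add: k_def algebra_simps)
  finally have "ennreal C \<le> weighted_mean factorial_mass ?g ?A"
    using sum by (intro weighted_mean_ge A_fin) linarith
  moreover have "?A \<in> centered_balls c 0"
    unfolding centered_balls_def by (rule imageI) simp
  ultimately show "\<exists>A\<in>centered_balls c 0. ennreal C \<le> weighted_mean factorial_mass ?g A"
    by blast
qed

lemma odd_point_in_centered_ball_one:
  assumes odd_linked: "\<And>k. 1 \<le> k \<Longrightarrow> c 1 (2 * k + 1) = 0"
    and "1 \<le> K" "z \<in> level_ball c 1 r" "level z = K"
  shows "2 * K + 1 \<in> level_ball c 1 r"
proof -
  have "z \<noteq> 1" using assms(2,4) by (auto simp: level_def)
  then have "2 * real K + 2 + c 1 z < r"
    using level_dist_neq[of 1 z c] assms(3,4) by (simp add: level_ball_def level_def)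
  moreover have "level_dist c 1 (2 * K + 1) = 2 * real K + 2"
    using level_dist_neq[of 1 "2 * K + 1" c] odd_linked[OF assms(2)] assms(2) by (simp add: level_def)
  ultimately show ?thesis
    using c_nonneg[of 1 z] by (simp add: level_ball_def)
qed

lemma SUP_centered_balls_one_le_one:
  assumes odd_linked: "\<And>k. 1 \<le> k \<Longrightarrow> c 1 (2 * k + 1) = 0"
  shows "(SUP A\<in>centered_balls c 1. weighted_mean factorial_mass (even_supported (\<lambda>k. real k * fact k)) A) \<le> ennreal 1"
proof (rule SUP_weighted_mean_le)
  let ?g = "even_supported (\<lambda>k. real k * fact k)"
  fix A assume A: "A \<in> centered_balls c 1"
  then obtain r where r: "0 < r" "A = level_ball c 1 r"
    by (auto simp: centered_balls_def)
  from A have "A \<in> balls_through c 1"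
    using centered_balls_subset by blast
  then obtain k' r' K z where "0 < r'" "A = level_ball c k' r'" "1 \<in> A"
    and K: "finite A" "A \<noteq> {}" "A \<subseteq> {..<2 * K + 2}" "z \<in> A" "level z = K"
    by (rule obtain_ball_top_level)
  have "weighted_sum factorial_mass ?g A \<le> weighted_sum factorial_mass ?g {..<2 * K + 2}"
    by (rule weighted_sum_mono[OF finite_lessThan K(3)])
  also have "\<dots> = fact (K + 1) - 1"
    using weighted_sum_even_supported[of factorial_mass] sum_mult_fact
    by (simp add: factorial_mass_def)
  finally have sum: "weighted_sum factorial_mass ?g A \<le> fact (K + 1) - 1" .
  have "weighted_sum factorial_mass ?g A \<le> 1 * sum factorial_mass A"
  proof (cases "K = 0")
    case True
    then show ?thesis
      using sum sum_pos_nonempty[OF K(1,2)] by simp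
  next
    case False
    then have "2 * K + 1 \<in> A"
      using odd_point_in_centered_ball_one[OF odd_linked] K(4,5) r(2) by simp
    then have "factorial_mass (2 * K + 1) \<le> sum factorial_mass A"
      by (rule member_le_sum_weights[OF K(1)])
    then have "2 * real K * fact K - 1 \<le> sum factorial_mass A"
      using factorial_mass_odd[of K] False by simp
    moreover have "fact (K + 1) \<le> 2 * real K * (fact K :: real)"
      using False by (simp add: algebra_simps mult_right_mono)
    ultimately show ?thesis
      using sum by linarith
  qed
  then show "finite A \<and> A \<noteq> {} \<and> weighted_sum factorial_mass ?g A \<le> 1 * sum factorial_mass A"
    using K(1,2) by blast
qed

lemma not_infinity_propagates_centered_balls:
  assumes "\<And>k. 1 \<le> k \<Longrightarrow> c 0 (2 * k) = 0" "\<And>k. 1 \<le> k \<Longrightarrow> c 0 (2 * k + 1) = 1"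
    and "\<And>k. 1 \<le> k \<Longrightarrow> c 1 (2 * k + 1) = 0"
  shows "\<not> infinity_propagates factorial_mass (centered_balls c)"
  by (rule not_infinity_propagatesI[OF SUP_centered_balls_zero_infinite[OF assms(1,2)]
        SUP_centered_balls_one_le_one[OF assms(3)]])

lemma small_ball_through_one:
  assumes links: "\<And>k w. 2 \<le> k \<Longrightarrow> w \<noteq> k \<Longrightarrow> c k w < 1 \<Longrightarrow> (w = 0 \<and> even k) \<or> (w = 1 \<and> odd k)"
    and "1 \<le> K" "level k = K" "r \<le> 2 * real K + 3" "1 \<in> level_ball c k r"
  shows "odd k \<and> level_ball c k r \<subseteq> {k, 1}"
proof -
  have k: "2 \<le> k" "k \<noteq> 1"
    using assms(2,3) by (auto simp: level_def)
  have linked: "c k w < 1" if "w \<in> level_ball c k r" "w \<noteq> k" for w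
    using small_level_ball[of k K r w] assms(3,4) that c_le_one[of k w] by auto
  have "odd k"
    using links[OF k(1) k(2)[symmetric] linked[OF assms(5) k(2)[symmetric]]] by simp
  moreover have "w \<in> {k, 1}" if "w \<in> level_ball c k r" for w
    using links[OF k(1) _ linked[OF that]] \<open>odd k\<close> by (cases "w = k") auto
  ultimately show ?thesis by blast
qed

lemma weighted_sum_even_fact_le_sum:
  assumes links: "\<And>k w. 2 \<le> k \<Longrightarrow> w \<noteq> k \<Longrightarrow> c k w < 1 \<Longrightarrow> (w = 0 \<and> even k) \<or> (w = 1 \<and> odd k)"
    and "A \<in> balls_through c 1"
  shows "weighted_sum factorial_mass (even_supported fact) A \<le> sum factorial_mass A"
proof -
  let ?g = "even_supported fact"
  obtain k r K z where kr: "0 < r" "A = level_ball c k r" "1 \<in> A" "finite A" "A \<noteq> {}"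
    and K: "A \<subseteq> {..<2 * K + 2}" "z \<in> A" "level z = K"
    using assms(2) by (rule obtain_ball_top_level)
  have sum: "weighted_sum factorial_mass ?g A \<le> (\<Sum>k\<le>K. fact k)"
    using weighted_sum_mono[OF finite_lessThan K(1), of ?g]
      weighted_sum_even_supported[of factorial_mass fact K] by (simp add: factorial_mass_def)
  show ?thesis
  proof (cases "K = 0")
    case True
    then show ?thesis
      using sum member_le_sum_weights[OF kr(4,3)] by (simp add: factorial_mass_def level_mass_def)
  next
    case False
    then have lower: "weighted_sum factorial_mass ?g A \<le> sum factorial_mass {..<2 * K}"
      using sum sum_fact_le[of K] sum_factorial_mass[of K] by simp
    have "{..<2 * K} \<subseteq> A \<or> (level k = K \<and> r \<le> 2 * real K + 3)"
      using level_ball_cases[OF kr(1)] K kr(2) by blast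
    then show ?thesis
    proof
      assume "{..<2 * K} \<subseteq> A"
      then have "sum factorial_mass {..<2 * K} \<le> sum factorial_mass A"
        by (rule sum_mono_subset[OF kr(4)])
      then show ?thesis
        using lower by simp
    next
      assume "level k = K \<and> r \<le> 2 * real K + 3"
      then have "odd k" "A \<subseteq> {k, 1}"
        using small_ball_through_one[OF links, of K k r] False kr(2,3) by auto
      then have "weighted_sum factorial_mass ?g A \<le> weighted_sum factorial_mass ?g {k, 1}"
        by (intro weighted_sum_mono) auto
      also have "\<dots> = 0"
        using \<open>odd k\<close> by (cases "k = 1") (simp_all add: weighted_sum_def even_supported_def)
      finally show ?thesis
        using sum_pos_nonempty[OF kr(4,5)] by simp
    qed
  qed
qed

lemma SUP_balls_through_one_le_one:
  assumes links: "\<And>k w. 2 \<le> k \<Longrightarrow> w \<noteq> k \<Longrightarrow> c k w < 1 \<Longrightarrow> (w = 0 \<and> even k) \<or> (w = 1 \<and> odd k)"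
  shows "(SUP A\<in>balls_through c 1. weighted_mean factorial_mass (even_supported fact) A) \<le> ennreal 1"
proof (rule SUP_weighted_mean_le)
  fix A assume A: "A \<in> balls_through c 1"
  then show "finite A \<and> A \<noteq> {} \<and> weighted_sum factorial_mass (even_supported fact) A \<le> 1 * sum factorial_mass A"
    using weighted_sum_even_fact_le_sum[OF links A] balls_through_finite[OF A] by auto
qed

lemma not_infinity_propagates_balls_through_two_hubs:
  assumes hub: "\<And>k. 1 \<le> k \<Longrightarrow> c (2 * k) 0 = 0"
    and unlinked: "\<And>k w. 1 \<le> k \<Longrightarrow> w \<notin> {0, 2 * k} \<Longrightarrow> c (2 * k) w = 1"
    and links: "\<And>k w. 2 \<le> k \<Longrightarrow> w \<noteq> k \<Longrightarrow> c k w < 1 \<Longrightarrow> (w = 0 \<and> even k) \<or> (w = 1 \<and> odd k)"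
  shows "\<not> infinity_propagates factorial_mass (balls_through c)"
proof (rule not_infinity_propagatesI)
  show "(SUP A\<in>balls_through c 0. weighted_mean factorial_mass (even_supported fact) A) = \<infinity>"
  proof (rule SUP_balls_through_hub[OF hub unlinked])
    show "factorial_mass (2 * k) = 1" for k
      by (simp add: factorial_mass_def)
    fix C :: real
    have "C \<le> real (nat \<lceil>C\<rceil> + 1)"
      using real_nat_ceiling_ge[of C] by simp
    also have "\<dots> \<le> real (fact (nat \<lceil>C\<rceil> + 1))"
      by (simp only: of_nat_le_iff fact_ge_self)
    also have "\<dots> = fact (nat \<lceil>C\<rceil> + 1)"
      by (rule of_nat_fact)
    finally show "\<exists>k\<ge>1. C \<le> \<bar>even_supported fact (2 * k)\<bar>"
      by (intro exI[of _ "nat \<lceil>C\<rceil> + 1"]) (simp add: even_supported_def)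
  qed
qed (rule SUP_balls_through_one_le_one[OF links])

end

definition hub_links :: "nat \<Rightarrow> nat \<Rightarrow> bool" where
  "hub_links i j \<longleftrightarrow> i = 0 \<and> even j \<and> 2 \<le> j"

definition hub_and_pair_links :: "nat \<Rightarrow> nat \<Rightarrow> bool" where
  "hub_and_pair_links i j \<longleftrightarrow> hub_links i j \<or> (i = 1 \<and> 2 \<le> j) \<or> (even i \<and> 2 \<le> i \<and> j = i + 1)"

definition two_hub_links :: "nat \<Rightarrow> nat \<Rightarrow> bool" where
  "two_hub_links i j \<longleftrightarrow> hub_links i j \<or> (i = 1 \<and> odd j \<and> 3 \<le> j)"

definition realizes_pattern :: "(nat \<Rightarrow> nat \<Rightarrow> real) \<Rightarrow> (nat \<Rightarrow> real) \<Rightarrow> bool \<Rightarrow> bool \<Rightarrow> bool" where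
  "realizes_pattern c m a b \<longleftrightarrow> level_space c m \<and> \<not> doubling \<nat> (level_metric c) (weighted_measure m) \<and>
     (infinity_propagates m (balls_through c) \<longleftrightarrow> a) \<and> (infinity_propagates m (centered_balls c) \<longleftrightarrow> b)"

lemma (in geometric_space) realizes_pattern_geometric:
  "realizes_pattern c geometric_mass a b \<longleftrightarrow>
     (infinity_propagates geometric_mass (balls_through c) \<longleftrightarrow> a) \<and>
     (infinity_propagates geometric_mass (centered_balls c) \<longleftrightarrow> b)"
  using level_space_axioms not_doubling_geometric by (simp add: realizes_pattern_def)

lemma (in factorial_space) realizes_pattern_factorial:
  "realizes_pattern c factorial_mass a b \<longleftrightarrow>
     (infinity_propagates factorial_mass (balls_through c) \<longleftrightarrow> a) \<and>
     (infinity_propagates factorial_mass (centered_balls c) \<longleftrightarrow> b)"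
  using level_space_axioms not_doubling_factorial by (simp add: realizes_pattern_def)

lemma realizes_pattern_unlinked: "realizes_pattern (link_perturbation (\<lambda>_ _. False)) geometric_mass True True"
proof -
  interpret geometric_space "link_perturbation (\<lambda>_ _. False)"
    by (rule geometric_space_link)
  show ?thesis
    unfolding realizes_pattern_geometric
    using infinity_propagates_balls_through_unperturbed[OF geometric_doubling_levels]
      infinity_propagates_centered_balls[OF geometric_doubling_levels]
    by (simp add: link_perturbation_def)
qed

lemma realizes_pattern_hub: "realizes_pattern (link_perturbation hub_links) geometric_mass False True"
proof -
  interpret geometric_space "link_perturbation hub_links"
    by (rule geometric_space_link)
  have "\<not> infinity_propagates geometric_mass (balls_through (link_perturbation hub_links))"
    by (rule not_infinity_propagates_balls_through_hub) (auto simp: link_perturbation_def hub_links_def)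
  then show ?thesis
    unfolding realizes_pattern_geometric
    using infinity_propagates_centered_balls[OF geometric_doubling_levels] by simp
qed

lemma realizes_pattern_hub_and_pairs: "realizes_pattern (link_perturbation hub_and_pair_links) factorial_mass True False"
proof -
  interpret factorial_space "link_perturbation hub_and_pair_links"
    by (rule factorial_space_link)
  have "infinity_propagates factorial_mass (balls_through (link_perturbation hub_and_pair_links))"
    by (rule infinity_propagates_balls_through_pairs) (auto simp: link_perturbation_def hub_and_pair_links_def)
  moreover have "\<not> infinity_propagates factorial_mass (centered_balls (link_perturbation hub_and_pair_links))"
    by (rule not_infinity_propagates_centered_balls)
      (auto simp: link_perturbation_def hub_and_pair_links_def hub_links_def)
  ultimately show ?thesis
    unfolding realizes_pattern_factorial by simp
qed

lemma realizes_pattern_two_hubs: "realizes_pattern (link_perturbation two_hub_links) factorial_mass False False"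
proof -
  interpret factorial_space "link_perturbation two_hub_links"
    by (rule factorial_space_link)
  have "\<not> infinity_propagates factorial_mass (balls_through (link_perturbation two_hub_links))"
    by (rule not_infinity_propagates_balls_through_two_hubs)
      (auto simp: link_perturbation_def two_hub_links_def hub_links_def split: if_splits)
  moreover have "\<not> infinity_propagates factorial_mass (centered_balls (link_perturbation two_hub_links))"
    by (rule not_infinity_propagates_centered_balls)
      (auto simp: link_perturbation_def two_hub_links_def hub_links_def)
  ultimately show ?thesis
    unfolding realizes_pattern_factorial by simp
qed

theorem theorem6p1p1:
  shows "\<forall>a b :: bool. \<exists>(X::real set) (rho::real \<Rightarrow> real \<Rightarrow> real) (mu::real measure).
           metric_measure_space X rho mu \<and> \<not> doubling X rho mu \<and>
           (dichotomy X rho mu (maxnc X rho mu) \<longleftrightarrow> a) \<and>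
           (dichotomy X rho mu (maxc X rho mu) \<longleftrightarrow> b)"
proof (intro allI)
  fix a b :: bool
  have "\<exists>c m. realizes_pattern c m a b"
  proof (cases a; cases b)
    assume a b then show ?thesis using realizes_pattern_unlinked by auto
  next
    assume "\<not> a" b then show ?thesis using realizes_pattern_hub by auto
  next
    assume a "\<not> b" then show ?thesis using realizes_pattern_hub_and_pairs by auto
  next
    assume "\<not> a" "\<not> b" then show ?thesis using realizes_pattern_two_hubs by auto
  qed
  then obtain c m where "realizes_pattern c m a b" by blast
  then interpret level_space c m
    by (simp add: realizes_pattern_def)
  show "\<exists>(X::real set) rho mu. metric_measure_space X rho mu \<and> \<not> doubling X rho mu \<and>
      (dichotomy X rho mu (maxnc X rho mu) \<longleftrightarrow> a) \<and> (dichotomy X rho mu (maxc X rho mu) \<longleftrightarrow> b)"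
    using \<open>realizes_pattern c m a b\<close> metric_measure_space_level dichotomy_maxnc_iff dichotomy_maxc_iff
    unfolding realizes_pattern_def by blast
qed

end
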